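(* For all $\delta,k\in\mathbb N^+$ and $T_{\max}\ge 4$, there is an infinite family of temporal graphs $\{\mathcal G_n\}_{n\in\mathbb N}$ with lifetime $T_{\max}$ such that each $\mathcal G_n$ has $\Theta(n)$ nodes and the minimum number of rounds required by any Discoverer to win the temporal graph discovery game on $\mathcal G_n$ (with parameters $T_{\max},\delta,k$) grows in $\Omega\big(n(T_{\max}-3)/(\delta k)\big)$.
   Context: A temporal graph $\mathcal G=(V,E,\lambda)$ with lifetime $T_{\max}$ consists of a finite undirected static graph $(V,E)$ and a labeling $\lambda:E\to\{1,\dots,T_{\max}\}$; edge $e$ is present only at time $\lambda(e)$. Infection model with parameter $\delta$: a set $S\subseteq V\times[0,T_{\max}]$ of seed infections is given; a seed $(u,t)$ makes $u$ infected at time $t$; otherwise a susceptible node $u$ becomes infected at time $t$ iff some neighbour $v$ infectious at time $t$ has $\lambda(uv)=t$ (with exactly one infector recorded if several exist). A node infected at time $t$ is infectious at times $t+1,\dots,t+\delta$ and resistant afterwards. The infection log records triples $(u,v,t)$ ($u$ infected $v$ at time $t$; seeds as $(u,u,t)$); a log is consistent with $S$ if some infection chain seeded by $S$ produces it. Temporal graph discovery game with parameters $T_{\max},\delta,k$: the Discoverer knows $V$ and $E$; each round it submits at most $k$ seed infections and the Adversary answers with a consistent infection log under some labeling consistent with all previous answers (adaptively chosen). The Discoverer wins when it submits a labeling that matches the Adversary's final labeling consistent with all logs, i.e. effectively iff the labeling is uniquely determined by the logs. *)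

theory Defs
  imports Complex_Main
begin

definition simple_graph :: "nat set \<Rightarrow> nat set set \<Rightarrow> bool" where
  "simple_graph V E \<longleftrightarrow> finite V \<and>
     E \<subseteq> {{u, v} | u v. u \<in> V \<and> v \<in> V \<and> u \<noteq> v}"

text \<open>A labeling of E with lifetime Tmax: values in 1..Tmax on edges; normalised to 0
  outside E so that labelings are compared only on E.\<close>
definition labeling :: "nat set set \<Rightarrow> nat \<Rightarrow> (nat set \<Rightarrow> nat) \<Rightarrow> bool" where
  "labeling E Tmax lab \<longleftrightarrow> (\<forall>e\<in>E. 1 \<le> lab e \<and> lab e \<le> Tmax) \<and> (\<forall>e. e \<notin> E \<longrightarrow> lab e = 0)"

text \<open>L is an infection log (triples (infector, infected, time); seeds as (u,u,t))
  produced by some infection chain seeded by S, under labeling lab, with parameter delta.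
  A node infected at time t is infectious at times t+1..t+delta.\<close>
definition valid_log ::
  "nat set \<Rightarrow> nat set set \<Rightarrow> nat \<Rightarrow> nat \<Rightarrow> (nat set \<Rightarrow> nat) \<Rightarrow> (nat \<times> nat) set
    \<Rightarrow> (nat \<times> nat \<times> nat) set \<Rightarrow> bool" where
  "valid_log V E Tmax \<delta> lab S L \<longleftrightarrow>
     L \<subseteq> V \<times> V \<times> {0..Tmax} \<and>
     (\<forall>u v t u' t'. (u, v, t) \<in> L \<and> (u', v, t') \<in> L \<longrightarrow> u = u' \<and> t = t') \<and>
     (\<forall>u v t. (u, v, t) \<in> L \<longrightarrow>
        (if (v, t) \<in> S then u = v
         else u \<noteq> v \<and> {u, v} \<in> E \<and> lab {u, v} = t \<and>
              (\<exists>w t'. (w, u, t') \<in> L \<and> t' < t \<and> t \<le> t' + \<delta>))) \<and>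
     (\<forall>v\<in>V. \<forall>t\<le>Tmax.
        (\<not> (\<exists>u t'. (u, v, t') \<in> L \<and> t' < t)) \<and>
        ((v, t) \<in> S \<or>
         (\<exists>u w t'. (w, u, t') \<in> L \<and> t' < t \<and> t \<le> t' + \<delta> \<and> {u, v} \<in> E \<and> lab {u, v} = t))
        \<longrightarrow> (\<exists>u. (u, v, t) \<in> L))"

definition consistent_labelings ::
  "nat set \<Rightarrow> nat set set \<Rightarrow> nat \<Rightarrow> nat \<Rightarrow>
     ((nat \<times> nat) set \<times> (nat \<times> nat \<times> nat) set) list \<Rightarrow> (nat set \<Rightarrow> nat) set" where
  "consistent_labelings V E Tmax \<delta> H =
     {lab. labeling E Tmax lab \<and> (\<forall>(S, L) \<in> set H. valid_log V E Tmax \<delta> lab S L)}"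

text \<open>disc_wins V E Tmax delta k r H: from history H, the Discoverer has a strategy
  guaranteeing that, against every adaptive Adversary, after at most r further rounds
  the labeling is uniquely determined by the logs (i.e. the Discoverer wins).\<close>
fun disc_wins ::
  "nat set \<Rightarrow> nat set set \<Rightarrow> nat \<Rightarrow> nat \<Rightarrow> nat \<Rightarrow> nat \<Rightarrow>
     ((nat \<times> nat) set \<times> (nat \<times> nat \<times> nat) set) list \<Rightarrow> bool" where
  "disc_wins V E Tmax \<delta> k 0 H =
     (\<forall>l1 \<in> consistent_labelings V E Tmax \<delta> H. \<forall>l2 \<in> consistent_labelings V E Tmax \<delta> H. l1 = l2)"
| "disc_wins V E Tmax \<delta> k (Suc r) H =
     (disc_wins V E Tmax \<delta> k r H \<or>
      (\<exists>S. S \<subseteq> V \<times> {0..Tmax} \<and> finite S \<and> card S \<le> k \<and>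
         (\<forall>L. (\<exists>lab \<in> consistent_labelings V E Tmax \<delta> H. valid_log V E Tmax \<delta> lab S L)
              \<longrightarrow> disc_wins V E Tmax \<delta> k r (H @ [(S, L)]))))"

end

theory Submission
  imports Defs
begin

(* When the edges are pairwise disjoint, an infection crosses at most one edge, so the log of a
   round tells about an edge e only which of the times in the delta-windows following the seeds
   at the endpoints of e is its label. The Adversary keeps a set A e of candidate labels for
   each edge such that every labeling in the product is consistent with all logs so far. Against
   a seed set S it deletes from each A e the times in the windows of e (keeping one candidate if
   nothing else is left); all surviving labelings then give the same log. The potential
   sum_e (|A e| - 1) thus drops by at most delta k per round, starting from n (Tmax - 1) on a
   perfect matching with n edges, and the Discoverer can only win once it is 0. *)

definition first_seed :: "(nat \<times> nat) set \<Rightarrow> nat \<Rightarrow> nat \<Rightarrow> bool" where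
  "first_seed S v a \<longleftrightarrow> (v, a) \<in> S \<and> (\<forall>b. (v, b) \<in> S \<longrightarrow> a \<le> b)"

lemma first_seed_exists:
  assumes "(v, t) \<in> S"
  obtains a where "first_seed S v a" "a \<le> t"
proof
  show "first_seed S v (LEAST a. (v, a) \<in> S)"
    unfolding first_seed_def using assms by (auto intro: LeastI Least_le)
  show "(LEAST a. (v, a) \<in> S) \<le> t"
    using assms by (rule Least_le)
qed

lemma first_seed_unique: "first_seed S v a \<Longrightarrow> first_seed S v b \<Longrightarrow> a = b"
  unfolding first_seed_def by (simp add: order_antisym)

definition crossing ::
  "nat set set \<Rightarrow> nat \<Rightarrow> nat \<Rightarrow> (nat set \<Rightarrow> nat) \<Rightarrow> (nat \<times> nat) set \<Rightarrow> nat \<Rightarrow> nat \<Rightarrow> nat \<Rightarrow> bool"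
where
  "crossing E Tmax \<delta> lab S u v l \<longleftrightarrow> {u, v} \<in> E \<and> lab {u, v} = l \<and> l \<le> Tmax \<and>
     (\<exists>a. first_seed S u a \<and> a < l \<and> l \<le> a + \<delta>) \<and> (\<forall>b. (v, b) \<in> S \<longrightarrow> l < b)"

text \<open>The log of a round when the edges are pairwise disjoint: a node infected through its
  unique edge can only reach its infector, which is already infected, so every infection is
  either a first seed or a single crossing out of a first seed.\<close>
definition matching_log ::
  "nat set set \<Rightarrow> nat \<Rightarrow> nat \<Rightarrow> (nat set \<Rightarrow> nat) \<Rightarrow> (nat \<times> nat) set \<Rightarrow> (nat \<times> nat \<times> nat) set"
where
  "matching_log E Tmax \<delta> lab S =
     {(v, v, b) | v b. first_seed S v b \<and> \<not> (\<exists>u l. crossing E Tmax \<delta> lab S u v l)}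
     \<union> {(u, v, l) | u v l. crossing E Tmax \<delta> lab S u v l}"

definition seed_window :: "(nat \<times> nat) set \<Rightarrow> nat \<Rightarrow> nat set \<Rightarrow> nat set" where
  "seed_window S \<delta> e = {t. \<exists>x s. (x, s) \<in> S \<and> x \<in> e \<and> s < t \<and> t \<le> s + \<delta>}"

lemma finite_seed_window:
  assumes "finite S"
  shows "finite (seed_window S \<delta> e)"
proof (rule finite_subset)
  show "seed_window S \<delta> e \<subseteq> (\<Union>p\<in>S. {snd p<..snd p + \<delta>})"
    unfolding seed_window_def by force
qed (use assms in simp)

lemma matching_log_cong:
  assumes "\<And>e t. e \<in> E \<Longrightarrow> t \<in> seed_window S \<delta> e \<Longrightarrow> lab e = t \<longleftrightarrow> lab' e = t"
  shows "matching_log E Tmax \<delta> lab S = matching_log E Tmax \<delta> lab' S"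
proof -
  have "crossing E Tmax \<delta> lab S u v l = crossing E Tmax \<delta> lab' S u v l" for u v l
    using assms unfolding crossing_def first_seed_def seed_window_def by blast
  then show ?thesis
    unfolding matching_log_def by simp
qed

text \<open>The Adversary's answer to a round: drop the candidate labels that a seed could reveal,
  keeping one arbitrary candidate if none would survive.\<close>
definition avoid :: "'a set \<Rightarrow> 'a set \<Rightarrow> 'a set" where
  "avoid A W = (if A \<subseteq> W then {SOME a. a \<in> A} else A - W)"

lemma avoid_nonempty: "avoid A W \<noteq> {}"
  unfolding avoid_def by auto

lemma avoid_subset: "A \<noteq> {} \<Longrightarrow> avoid A W \<subseteq> A"
  unfolding avoid_def by (simp add: some_in_eq)

lemma avoid_eq_or_outside: "x \<in> avoid A W \<Longrightarrow> y \<in> avoid A W \<Longrightarrow> x = y \<or> x \<notin> W \<and> y \<notin> W"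
  unfolding avoid_def by (cases "A \<subseteq> W") auto

lemma card_avoid:
  assumes "finite W"
  shows "card A - 1 \<le> (card (avoid A W) - 1) + card W"
proof (cases "A \<subseteq> W")
  case True
  then have "card A \<le> card W"
    using assms by (rule card_mono[rotated])
  then show ?thesis
    by linarith
next
  case False
  then have "avoid A W = A - W"
    unfolding avoid_def by simp
  then show ?thesis
    using diff_card_le_card_Diff[OF assms, of A] by simp
qed

definition labels_from :: "nat set set \<Rightarrow> (nat set \<Rightarrow> nat set) \<Rightarrow> (nat set \<Rightarrow> nat) \<Rightarrow> bool" where
  "labels_from E A lab \<longleftrightarrow> (\<forall>e\<in>E. lab e \<in> A e) \<and> (\<forall>e. e \<notin> E \<longrightarrow> lab e = 0)"

lemma labels_from_exists:
  assumes "\<forall>e\<in>E. A e \<noteq> {}"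
  obtains lab where "labels_from E A lab"
proof
  show "labels_from E A (\<lambda>e. if e \<in> E then SOME a. a \<in> A e else 0)"
    using assms unfolding labels_from_def by (simp add: some_in_eq)
qed

lemma labels_from_mono: "\<forall>e\<in>E. A' e \<subseteq> A e \<Longrightarrow> labels_from E A' lab \<Longrightarrow> labels_from E A lab"
  unfolding labels_from_def by blast

lemma labels_from_not_unique:
  assumes "\<forall>e\<in>E. A e \<noteq> {}" "e \<in> E" "2 \<le> card (A e)"
  obtains lab lab' where "labels_from E A lab" "labels_from E A lab'" "lab \<noteq> lab'"
proof -
  obtain x y where xy: "x \<in> A e" "y \<in> A e" "x \<noteq> y"
  proof -
    have "finite (A e)" "\<not> card (A e) \<le> Suc 0"
      using assms(3) card.infinite by fastforce+
    then show ?thesis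
      using card_le_Suc0_iff_eq that by blast
  qed
  obtain lab where lab: "labels_from E A lab"
    using labels_from_exists[OF assms(1)] .
  have "labels_from E A (lab(e := x))" "labels_from E A (lab(e := y))"
    using lab xy assms(2) unfolding labels_from_def by auto
  moreover have "lab(e := x) \<noteq> lab(e := y)"
    using xy(3) by (metis fun_upd_same)
  ultimately show ?thesis
    using that by blast
qed

lemma matching_log_avoid_windows:
  assumes "labels_from E (\<lambda>e. avoid (A e) (seed_window S \<delta> e)) lab"
    and "labels_from E (\<lambda>e. avoid (A e) (seed_window S \<delta> e)) lab'"
  shows "matching_log E Tmax \<delta> lab S = matching_log E Tmax \<delta> lab' S"
proof (rule matching_log_cong)
  fix e t
  assume "e \<in> E" and t: "t \<in> seed_window S \<delta> e"
  then have "lab e \<in> avoid (A e) (seed_window S \<delta> e)" "lab' e \<in> avoid (A e) (seed_window S \<delta> e)"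
    using assms unfolding labels_from_def by auto
  then have "lab e = lab' e \<or> lab e \<notin> seed_window S \<delta> e \<and> lab' e \<notin> seed_window S \<delta> e"
    by (rule avoid_eq_or_outside)
  then show "lab e = t \<longleftrightarrow> lab' e = t"
    using t by auto
qed

locale matching_graph =
  fixes V :: "nat set" and E :: "nat set set"
  assumes simple: "simple_graph V E"
    and edges_disjoint: "\<And>e e' x. e \<in> E \<Longrightarrow> e' \<in> E \<Longrightarrow> x \<in> e \<Longrightarrow> x \<in> e' \<Longrightarrow> e = e'"
begin

lemma edge_endpoints:
  assumes "{u, v} \<in> E"
  shows "u \<noteq> v" "u \<in> V" "v \<in> V"
proof -
  obtain a b where "{u, v} = {a, b}" "a \<in> V" "b \<in> V" "a \<noteq> b"
    using assms simple unfolding simple_graph_def by blast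
  then show "u \<noteq> v" "u \<in> V" "v \<in> V"
    by (auto simp: doubleton_eq_iff)
qed

lemma partner_unique:
  assumes "{u, v} \<in> E" "{w, u} \<in> E"
  shows "w = v"
proof -
  have "{w, u} = {u, v}"
    using edges_disjoint[OF assms(2,1)] by blast
  then show ?thesis
    using edge_endpoints(1)[OF assms(1)] by (auto simp: doubleton_eq_iff)
qed

lemma finite_edges: "finite E"
  using simple unfolding simple_graph_def by (blast intro: finite_subset[of E "Pow V"])

lemma sum_card_seed_window_le:
  assumes "finite S"
  shows "(\<Sum>e\<in>E. card (seed_window S \<delta> e)) \<le> \<delta> * card S"
proof -
  define seeds_at where "seeds_at e = {p \<in> S. fst p \<in> e}" for e
  have finite_seeds_at: "finite (seeds_at e)" for e
    using assms unfolding seeds_at_def by simp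
  have "card (seed_window S \<delta> e) \<le> \<delta> * card (seeds_at e)" for e
  proof -
    have "seed_window S \<delta> e = (\<Union>p\<in>seeds_at e. {snd p<..snd p + \<delta>})"
      unfolding seed_window_def seeds_at_def by force
    also have "card \<dots> \<le> (\<Sum>p\<in>seeds_at e. card {snd p<..snd p + \<delta>})"
      by (rule card_UN_le[OF finite_seeds_at])
    also have "\<dots> = \<delta> * card (seeds_at e)"
      by simp
    finally show ?thesis .
  qed
  then have "(\<Sum>e\<in>E. card (seed_window S \<delta> e)) \<le> \<delta> * (\<Sum>e\<in>E. card (seeds_at e))"
    by (simp add: sum_distrib_left sum_mono)
  also have "(\<Sum>e\<in>E. card (seeds_at e)) = card (\<Union>e\<in>E. seeds_at e)"
    using finite_edges finite_seeds_at edges_disjoint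
    by (subst card_UN_disjoint) (auto simp: seeds_at_def)
  also have "\<dots> \<le> card S"
    using assms by (intro card_mono) (auto simp: seeds_at_def)
  finally show ?thesis
    by simp
qed

context
  fixes Tmax \<delta> :: nat and lab :: "nat set \<Rightarrow> nat" and S :: "(nat \<times> nat) set"
begin

abbreviation crosses :: "nat \<Rightarrow> nat \<Rightarrow> nat \<Rightarrow> bool" where
  "crosses \<equiv> crossing E Tmax \<delta> lab S"

abbreviation round_log :: "(nat \<times> nat \<times> nat) set" where
  "round_log \<equiv> matching_log E Tmax \<delta> lab S"

lemma mem_matching_log:
  "(u, v, t) \<in> round_log \<longleftrightarrow> u = v \<and> first_seed S v t \<and> \<not> (\<exists>w l. crosses w v l) \<or> crosses u v t"
  unfolding matching_log_def by blast

lemma crossing_unique: "crosses u v l \<Longrightarrow> crosses u' v l' \<Longrightarrow> u = u' \<and> l = l'"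
  unfolding crossing_def using partner_unique by (metis insert_commute)

lemma entry_before_seed:
  assumes "(v, b) \<in> S"
  shows "\<exists>u t. (u, v, t) \<in> round_log \<and> t \<le> b"
proof -
  obtain a where a: "first_seed S v a" "a \<le> b"
    using first_seed_exists[OF assms] .
  show ?thesis
  proof (cases "\<exists>u l. crosses u v l")
    case True
    then obtain u l where "crosses u v l"
      by blast
    moreover have "l < a"
      using calculation a(1) unfolding crossing_def first_seed_def by blast
    ultimately show ?thesis
      using a(2) mem_matching_log by (meson less_imp_le order_trans)
  next
    case False
    then show ?thesis
      using a mem_matching_log by blast
  qed
qed

text \<open>The only edge at u is {u, v}, and its single label comes after the first seed of u, so
  u is never reached through an edge.\<close>
lemma crossing_source_logged:
  assumes "crosses u v l"
  shows "\<exists>a. (u, u, a) \<in> round_log \<and> a < l \<and> l \<le> a + \<delta>"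
proof -
  obtain a where a: "first_seed S u a" "a < l" "l \<le> a + \<delta>" and uv: "{u, v} \<in> E" "lab {u, v} = l"
    using assms unfolding crossing_def by blast
  have "\<not> crosses w u l'" for w l'
  proof
    assume "crosses w u l'"
    then have "w = v" "lab {w, u} = l'" "l' < a"
      using partner_unique[OF uv(1)] a(1) unfolding crossing_def first_seed_def by blast+
    then show False
      using uv(2) a(2) by (simp add: insert_commute)
  qed
  then show ?thesis
    using a mem_matching_log by blast
qed

lemma matching_log_functional:
  assumes "(u, v, t) \<in> round_log" "(u', v, t') \<in> round_log"
  shows "u = u' \<and> t = t'"
proof (cases "\<exists>w l. crosses w v l")
  case True
  then have "crosses u v t" "crosses u' v t'"
    using assms mem_matching_log by blast+
  then show ?thesis
    by (rule crossing_unique)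
next
  case False
  then have "u = v" "u' = v" "first_seed S v t" "first_seed S v t'"
    using assms mem_matching_log by blast+
  then show ?thesis
    using first_seed_unique by blast
qed

lemma matching_log_sound:
  assumes "(u, v, t) \<in> round_log"
  shows "if (v, t) \<in> S then u = v
         else u \<noteq> v \<and> {u, v} \<in> E \<and> lab {u, v} = t \<and>
           (\<exists>w t'. (w, u, t') \<in> round_log \<and> t' < t \<and> t \<le> t' + \<delta>)"
proof (cases "crosses u v t")
  case True
  then have "(v, t) \<notin> S" "{u, v} \<in> E" "lab {u, v} = t"
    unfolding crossing_def by auto
  then show ?thesis
    using crossing_source_logged[OF True] edge_endpoints(1) by auto
next
  case False
  then have "u = v" "(v, t) \<in> S"
    using assms mem_matching_log unfolding first_seed_def by auto
  then show ?thesis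
    by simp
qed

lemma matching_log_complete:
  assumes "t \<le> Tmax" and not_earlier: "\<not> (\<exists>u t'. (u, v, t') \<in> round_log \<and> t' < t)"
    and cause: "(v, t) \<in> S \<or>
      (\<exists>u w t'. (w, u, t') \<in> round_log \<and> t' < t \<and> t \<le> t' + \<delta> \<and> {u, v} \<in> E \<and> lab {u, v} = t)"
  shows "\<exists>u. (u, v, t) \<in> round_log"
proof (cases "\<exists>b. (v, b) \<in> S \<and> b \<le> t")
  case True
  then obtain b u t' where "(u, v, t') \<in> round_log" "t' \<le> b" "b \<le> t"
    using entry_before_seed by blast
  moreover have "\<not> t' < t"
    using calculation(1) not_earlier by blast
  ultimately show ?thesis
    by (metis order.trans antisym_conv2)
next
  case no_seed: False
  then obtain u w t' where w: "(w, u, t') \<in> round_log" "t' < t" "t \<le> t' + \<delta>" "{u, v} \<in> E" "lab {u, v} = t"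
    using cause by blast
  have "\<not> crosses w u t'"
  proof
    assume "crosses w u t'"
    then have "w = v" "\<exists>a. (v, a) \<in> S \<and> a < t'"
      using partner_unique[OF w(4)] unfolding crossing_def first_seed_def by auto
    then show False
      using no_seed w(2) by auto
  qed
  then have "first_seed S u t'"
    using w(1) mem_matching_log by blast
  then have "crosses u v t"
    using w(2-5) no_seed assms(1) unfolding crossing_def by (auto simp: not_le)
  then show ?thesis
    using mem_matching_log by blast
qed

lemma matching_log_subset:
  assumes "S \<subseteq> V \<times> {0..Tmax}"
  shows "round_log \<subseteq> V \<times> V \<times> {0..Tmax}"
proof
  fix x
  assume "x \<in> round_log"
  then consider (seed) v b where "x = (v, v, b)" "first_seed S v b"
    | (cross) u v l where "x = (u, v, l)" "crosses u v l"
    unfolding matching_log_def by blast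
  then show "x \<in> V \<times> V \<times> {0..Tmax}"
  proof cases
    case seed
    then show ?thesis
      using assms unfolding first_seed_def by auto
  next
    case cross
    then show ?thesis
      using edge_endpoints(2,3) unfolding crossing_def by auto
  qed
qed

lemma valid_matching_log:
  assumes "S \<subseteq> V \<times> {0..Tmax}"
  shows "valid_log V E Tmax \<delta> lab S round_log"
  unfolding valid_log_def
  using matching_log_subset[OF assms] matching_log_functional matching_log_sound matching_log_complete
  by (intro conjI allI impI ballI) blast+

end


lemma potential_avoid_windows:
  assumes "finite S"
  shows "(\<Sum>e\<in>E. card (A e) - 1)
    \<le> (\<Sum>e\<in>E. card (avoid (A e) (seed_window S \<delta> e)) - 1) + \<delta> * card S"
proof -
  have "(\<Sum>e\<in>E. card (A e) - 1)
      \<le> (\<Sum>e\<in>E. (card (avoid (A e) (seed_window S \<delta> e)) - 1) + card (seed_window S \<delta> e))"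
    using card_avoid[OF finite_seed_window[OF assms]] by (rule sum_mono)
  also have "\<dots> \<le> (\<Sum>e\<in>E. card (avoid (A e) (seed_window S \<delta> e)) - 1) + \<delta> * card S"
    using sum_card_seed_window_le[OF assms] by (simp add: sum.distrib)
  finally show ?thesis .
qed


lemma not_disc_wins_while_uncertain:
  assumes "\<forall>e\<in>E. A e \<noteq> {}"
    and "\<forall>lab. labels_from E A lab \<longrightarrow> lab \<in> consistent_labelings V E Tmax \<delta> H"
    and "r * k * \<delta> < (\<Sum>e\<in>E. card (A e) - 1)"
  shows "\<not> disc_wins V E Tmax \<delta> k r H"
  using assms
proof (induction r arbitrary: H A)
  case 0
  then have "(\<Sum>e\<in>E. card (A e) - 1) \<noteq> 0"
    by simp
  then obtain e where "e \<in> E" "card (A e) - 1 \<noteq> 0"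
    by (meson sum.neutral)
  then have "e \<in> E" "2 \<le> card (A e)"
    by auto
  then obtain lab lab' where "labels_from E A lab" "labels_from E A lab'" "lab \<noteq> lab'"
    using labels_from_not_unique "0.prems"(1) by metis
  then show ?case
    using "0.prems"(2) by auto
next
  case (Suc r)
  have "r * k * \<delta> \<le> Suc r * k * \<delta>"
    by simp
  then have "\<not> disc_wins V E Tmax \<delta> k r H"
    using Suc.IH[OF Suc.prems(1,2)] Suc.prems(3) by linarith
  moreover have "\<exists>L. (\<exists>lab \<in> consistent_labelings V E Tmax \<delta> H. valid_log V E Tmax \<delta> lab S L)
      \<and> \<not> disc_wins V E Tmax \<delta> k r (H @ [(S, L)])"
    if S: "S \<subseteq> V \<times> {0..Tmax}" "finite S" "card S \<le> k" for S
  proof -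
    define A' where "A' = (\<lambda>e. avoid (A e) (seed_window S \<delta> e))"
    have A'_nonempty: "\<forall>e\<in>E. A' e \<noteq> {}"
      unfolding A'_def by (simp add: avoid_nonempty)
    have A'_subset: "\<forall>e\<in>E. A' e \<subseteq> A e"
      unfolding A'_def using Suc.prems(1) by (simp add: avoid_subset)
    obtain lab0 where lab0: "labels_from E A' lab0"
      using labels_from_exists[OF A'_nonempty] .
    define L where "L = matching_log E Tmax \<delta> lab0 S"
    have valid: "valid_log V E Tmax \<delta> lab S L" if "labels_from E A' lab" for lab
    proof -
      have "matching_log E Tmax \<delta> lab S = L"
        unfolding L_def using that lab0 unfolding A'_def by (rule matching_log_avoid_windows)
      then show ?thesis
        using valid_matching_log[OF S(1), of \<delta> lab] by simp
    qed
    have "\<forall>lab. labels_from E A' lab \<longrightarrow> lab \<in> consistent_labelings V E Tmax \<delta> (H @ [(S, L)])"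
      using Suc.prems(2) labels_from_mono[OF A'_subset] valid unfolding consistent_labelings_def by auto
    moreover have "r * k * \<delta> < (\<Sum>e\<in>E. card (A' e) - 1)"
    proof -
      have "Suc r * k * \<delta> < (\<Sum>e\<in>E. card (A' e) - 1) + \<delta> * card S"
        using Suc.prems(3) potential_avoid_windows[OF S(2), of A \<delta>] unfolding A'_def by linarith
      moreover have "\<delta> * card S \<le> \<delta> * k"
        using S(3) by (rule mult_le_mono2)
      moreover have "Suc r * k * \<delta> = r * k * \<delta> + \<delta> * k"
        by (simp add: algebra_simps)
      ultimately show ?thesis
        by linarith
    qed
    ultimately have "\<not> disc_wins V E Tmax \<delta> k r (H @ [(S, L)])"
      using Suc.IH A'_nonempty by blast
    moreover have "lab0 \<in> consistent_labelings V E Tmax \<delta> H"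
      using Suc.prems(2) labels_from_mono[OF A'_subset lab0] by blast
    ultimately show ?thesis
      using valid[OF lab0] by blast
  qed
  ultimately show ?case
    by (simp only: disc_wins.simps) blast
qed

lemma disc_rounds_lower_bound:
  assumes "disc_wins V E Tmax \<delta> k r []" "0 < Tmax"
  shows "card E * (Tmax - 1) \<le> r * k * \<delta>"
proof (rule ccontr)
  assume "\<not> ?thesis"
  then have "r * k * \<delta> < (\<Sum>e\<in>E. card {1..Tmax} - 1)"
    by simp
  moreover have "\<forall>lab. labels_from E (\<lambda>_. {1..Tmax}) lab \<longrightarrow> lab \<in> consistent_labelings V E Tmax \<delta> []"
    unfolding labels_from_def consistent_labelings_def labeling_def by auto
  ultimately show False
    using not_disc_wins_while_uncertain[of "\<lambda>_. {1..Tmax}"] assms by auto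
qed

end

definition matching_vertices :: "nat \<Rightarrow> nat set" where
  "matching_vertices n = {..<2 * n}"

definition matching_edges :: "nat \<Rightarrow> nat set set" where
  "matching_edges n = (\<lambda>i. {2 * i, 2 * i + 1}) ` {..<n}"

lemma matching_graph_family: "matching_graph (matching_vertices n) (matching_edges n)"
proof
  show "simple_graph (matching_vertices n) (matching_edges n)"
    unfolding simple_graph_def matching_vertices_def matching_edges_def by force
  show "e = e'" if "e \<in> matching_edges n" "e' \<in> matching_edges n" "x \<in> e" "x \<in> e'" for e e' x
    using that unfolding matching_edges_def by (auto; presburger)
qed

lemma card_matching_vertices: "card (matching_vertices n) = 2 * n"
  unfolding matching_vertices_def by simp

lemma card_matching_edges: "card (matching_edges n) = n"
proof -
  have "inj (\<lambda>i::nat. {2 * i, 2 * i + 1})"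
    by (rule injI) (auto simp: doubleton_eq_iff)
  then show ?thesis
    unfolding matching_edges_def by (simp add: card_image inj_on_subset)
qed

lemma matching_family_rounds_lower_bound:
  assumes "disc_wins (matching_vertices n) (matching_edges n) Tmax \<delta> k r []" "0 < Tmax"
  shows "n * (Tmax - 1) \<le> r * k * \<delta>"
proof -
  interpret matching_graph "matching_vertices n" "matching_edges n"
    by (rule matching_graph_family)
  show ?thesis
    using disc_rounds_lower_bound[OF assms] by (simp add: card_matching_edges)
qed

theorem mainTheorem2:
  "\<exists>c::real. c > 0 \<and>
    (\<forall>\<delta> k Tmax :: nat. 0 < \<delta> \<longrightarrow> 0 < k \<longrightarrow> 4 \<le> Tmax \<longrightarrow>
      (\<exists>(Vs :: nat \<Rightarrow> nat set) (Es :: nat \<Rightarrow> nat set set).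
         (\<forall>n. simple_graph (Vs n) (Es n)) \<and>
         (\<exists>c1 c2 :: real. c1 > 0 \<and> c2 > 0 \<and>
            (\<exists>N. \<forall>n\<ge>N. c1 * real n \<le> real (card (Vs n)) \<and> real (card (Vs n)) \<le> c2 * real n)) \<and>
         (\<exists>N. \<forall>n\<ge>N. \<forall>r. disc_wins (Vs n) (Es n) Tmax \<delta> k r [] \<longrightarrow>
              c * real n * (real Tmax - 3) / (real \<delta> * real k) \<le> real r)))"
proof (intro exI[of _ "1::real"] conjI allI impI)
  fix \<delta> k Tmax :: nat
  assume "0 < \<delta>" "0 < k" "4 \<le> Tmax"
  have "1 * real n * (real Tmax - 3) / (real \<delta> * real k) \<le> real r"
    if "disc_wins (matching_vertices n) (matching_edges n) Tmax \<delta> k r []" for n r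
  proof -
    have "real (n * (Tmax - 1)) \<le> real (r * k * \<delta>)"
      using matching_family_rounds_lower_bound[OF that] \<open>4 \<le> Tmax\<close> by (simp only: of_nat_le_iff)
    then have "real n * (real Tmax - 1) \<le> real r * (real \<delta> * real k)"
      using \<open>4 \<le> Tmax\<close> by (simp add: of_nat_diff mult_ac)
    then show ?thesis
      using \<open>0 < \<delta>\<close> \<open>0 < k\<close> by (simp add: pos_divide_le_eq mult_left_mono order_trans[rotated])
  qed
  then show "\<exists>Vs Es. (\<forall>n. simple_graph (Vs n) (Es n)) \<and>
      (\<exists>c1 c2 :: real. c1 > 0 \<and> c2 > 0 \<and>
        (\<exists>N. \<forall>n\<ge>N. c1 * real n \<le> real (card (Vs n)) \<and> real (card (Vs n)) \<le> c2 * real n)) \<and>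
      (\<exists>N. \<forall>n\<ge>N. \<forall>r. disc_wins (Vs n) (Es n) Tmax \<delta> k r [] \<longrightarrow>
        1 * real n * (real Tmax - 3) / (real \<delta> * real k) \<le> real r)"
    using matching_graph.simple[OF matching_graph_family] card_matching_vertices
    by (intro exI[of _ matching_vertices] exI[of _ matching_edges] conjI exI[of _ 2]) auto
qed simp

end
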